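(* For every integer $j\ge 0$, $f^*(3j+1,2)=2j+1$.
   Context: For integers $d\ge 1$, $n\ge 1$, the triangular grid is $T_d(n)=\{(x_1,\dots,x_d)\in\mathbb{Z}_{\ge 0}^d : x_1+\dots+x_d\le n-1\}$. A fractional cover of $T_d(n)$ is an assignment of nonnegative weights $w(H)$ to affine hyperplanes $H$ of $\mathbb{R}^d$ (only finitely many nonzero) such that $\sum_{H\ni p} w(H)\ge 1$ for every $p\in T_d(n)$. $f^*(n,d)$ denotes the minimum of $\sum_H w(H)$ over all fractional covers of $T_d(n)$. For $d=2$, hyperplanes are lines. *)

theory Defs
  imports Complex_Main
begin

text \<open>Points of R^d are represented as functions nat => real vanishing outside {0..<d}.\<close>

definition euclid_pts :: "nat \<Rightarrow> (nat \<Rightarrow> real) set" where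
  "euclid_pts d = {x. \<forall>i\<ge>d. x i = 0}"

definition affine_hyperplane :: "nat \<Rightarrow> (nat \<Rightarrow> real) set \<Rightarrow> bool" where
  "affine_hyperplane d H \<longleftrightarrow>
     (\<exists>a b. (\<exists>i<d. a i \<noteq> 0) \<and> H = {x \<in> euclid_pts d. (\<Sum>i<d. a i * x i) = b})"

definition tri_grid :: "nat \<Rightarrow> nat \<Rightarrow> (nat \<Rightarrow> real) set" where
  "tri_grid d n = {(\<lambda>i. real (c i)) | c. (\<forall>i\<ge>d. c i = 0) \<and> (\<Sum>i<d. c i) + 1 \<le> n}"

definition frac_cover :: "nat \<Rightarrow> nat \<Rightarrow> ((nat \<Rightarrow> real) set \<Rightarrow> real) \<Rightarrow> bool" where
  "frac_cover d n w \<longleftrightarrow>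
     (\<forall>H. 0 \<le> w H) \<and>
     (\<forall>H. w H \<noteq> 0 \<longrightarrow> affine_hyperplane d H) \<and>
     finite {H. w H \<noteq> 0} \<and>
     (\<forall>p \<in> tri_grid d n. (\<Sum>H \<in> {H. w H \<noteq> 0 \<and> p \<in> H}. w H) \<ge> 1)"

definition total_weight :: "((nat \<Rightarrow> real) set \<Rightarrow> real) \<Rightarrow> real" where
  "total_weight w = (\<Sum>H \<in> {H. w H \<noteq> 0}. w H)"

definition f_star :: "nat \<Rightarrow> nat \<Rightarrow> real" where
  "f_star n d = Inf {total_weight w | w. frac_cover d n w}"

end

theory Submission
  imports Defs
begin

(*
  Upper bound: give the lines x = i, y = i and x + y = 3j - i (i = 0..2j) the weight
  (2j + 1 - i) / (3j + 3), so the total weight is 2j + 1.  A grid point (x, y) lies on the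
  lines of index x, y and 3j - x - y; the weight formula evaluated at these three indices
  sums to 1, and an index above 2j, where there is no line, would only contribute a
  nonpositive value.

  Lower bound: a set P of (2j + 1)(j + 1) grid points meeting every line in at most j + 1
  points forces total weight at least |P| / (j + 1) = 2j + 1 by double counting.  P is a
  hexagon with two triangles removed, chosen so that all lines parallel to a side meet it in
  at most j + 1 points.  Any other line is steep with respect to one of the coordinates
  x, y, x + y, so distinct points on it differ by at least 2 in that coordinate, which takes
  only 2j + 1 values on P.
*)

definition line2 :: "real \<Rightarrow> real \<Rightarrow> real \<Rightarrow> (nat \<Rightarrow> real) set" where
  "line2 a0 a1 b = {v \<in> euclid_pts 2. a0 * v 0 + a1 * v 1 = b}"

definition grid_point :: "nat \<times> nat \<Rightarrow> nat \<Rightarrow> real" where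
  "grid_point s i = (if i = 0 then real (fst s) else if i = 1 then real (snd s) else 0)"

lemma sum_lessThan_2: "(\<Sum>i<2. f i) = f 0 + f (1::nat)"
  by (simp add: numeral_2_eq_2)

lemma affine_hyperplane_2_iff:
  "affine_hyperplane 2 H \<longleftrightarrow> (\<exists>a0 a1 b. (a0 \<noteq> 0 \<or> a1 \<noteq> 0) \<and> H = line2 a0 a1 b)"
proof
  assume "affine_hyperplane 2 H"
  then obtain a b where "\<exists>i<2. a i \<noteq> 0" "H = {x \<in> euclid_pts 2. (\<Sum>i<2. a i * x i) = b}"
    unfolding affine_hyperplane_def by blast
  then show "\<exists>a0 a1 b. (a0 \<noteq> 0 \<or> a1 \<noteq> 0) \<and> H = line2 a0 a1 b"
    unfolding line2_def sum_lessThan_2 by (auto simp: less_2_cases_iff)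
next
  assume "\<exists>a0 a1 b. (a0 \<noteq> 0 \<or> a1 \<noteq> 0) \<and> H = line2 a0 a1 b"
  then obtain a0 a1 b where "a0 \<noteq> 0 \<or> a1 \<noteq> 0" "H = line2 a0 a1 b" by blast
  then show "affine_hyperplane 2 H"
    unfolding affine_hyperplane_def line2_def sum_lessThan_2
    by (intro exI[of _ "\<lambda>i. if i = 0 then a0 else a1"] exI[of _ b]) auto
qed

lemma affine_hyperplane_line2: "a0 \<noteq> 0 \<or> a1 \<noteq> 0 \<Longrightarrow> affine_hyperplane 2 (line2 a0 a1 b)"
  unfolding affine_hyperplane_2_iff by blast

lemma grid_point_in_line2 [simp]:
  "grid_point s \<in> line2 a0 a1 b \<longleftrightarrow> a0 * real (fst s) + a1 * real (snd s) = b"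
  by (simp add: line2_def euclid_pts_def grid_point_def)

lemma tri_grid_2_eq: "tri_grid 2 n = grid_point ` {s. fst s + snd s < n}"
proof (intro equalityI subsetI)
  fix p assume "p \<in> tri_grid 2 n"
  then obtain c where c: "p = (\<lambda>i. real (c i))" "\<forall>i\<ge>2. c i = 0" "c 0 + c 1 < n"
    unfolding tri_grid_def sum_lessThan_2 by auto
  have "p = grid_point (c 0, c 1)"
    unfolding c(1) grid_point_def using c(2) by (auto simp: less_2_cases_iff not_less[symmetric])
  with c(3) show "p \<in> grid_point ` {s. fst s + snd s < n}" by force
next
  fix p assume "p \<in> grid_point ` {s. fst s + snd s < n}"
  then obtain x y where "p = grid_point (x, y)" "x + y < n" by auto
  then show "p \<in> tri_grid 2 n"
    unfolding tri_grid_def sum_lessThan_2 grid_point_def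
    by (intro CollectI exI[of _ "\<lambda>i. if i = 0 then x else if i = 1 then y else 0"]) auto
qed

lemma inj_grid_point: "inj grid_point"
proof (rule injI)
  fix s t assume "grid_point s = grid_point t"
  then have "grid_point s 0 = grid_point t 0" "grid_point s 1 = grid_point t 1" by simp_all
  then show "s = t" by (simp add: grid_point_def prod_eq_iff)
qed

lemma total_weight_lower_bound:
  assumes w: "frac_cover d n w"
    and P: "finite P" "P \<subseteq> tri_grid d n"
    and few: "\<And>H. affine_hyperplane d H \<Longrightarrow> card {p \<in> P. p \<in> H} \<le> m"
  shows "real (card P) \<le> real m * total_weight w"
proof -
  let ?F = "{H. w H \<noteq> 0}"
  have nonneg: "\<And>H. 0 \<le> w H" and aff: "\<And>H. H \<in> ?F \<Longrightarrow> affine_hyperplane d H"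
    and fin: "finite ?F" and cov: "\<And>p. p \<in> tri_grid d n \<Longrightarrow> 1 \<le> (\<Sum>H \<in> {H \<in> ?F. p \<in> H}. w H)"
    using w unfolding frac_cover_def by auto
  have "real (card P) = (\<Sum>p\<in>P. 1)" by simp
  also have "\<dots> \<le> (\<Sum>p\<in>P. \<Sum>H \<in> {H \<in> ?F. p \<in> H}. w H)"
    using P cov by (intro sum_mono) auto
  also have "\<dots> = (\<Sum>H\<in>?F. \<Sum>p \<in> {p \<in> P. p \<in> H}. w H)"
    using P(1) fin by (rule sum.swap_restrict)
  also have "\<dots> = (\<Sum>H\<in>?F. w H * real (card {p \<in> P. p \<in> H}))"
    by (simp add: mult.commute)
  also have "\<dots> \<le> (\<Sum>H\<in>?F. w H * real m)"
    using few aff nonneg by (intro sum_mono mult_left_mono) auto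
  also have "\<dots> = real m * total_weight w"
    by (simp add: total_weight_def sum_distrib_left mult.commute)
  finally show ?thesis .
qed

text \<open>Summing over indices lets different indices name the same hyperplane.\<close>
definition family_weight :: "'i set \<Rightarrow> ('i \<Rightarrow> 'h) \<Rightarrow> ('i \<Rightarrow> real) \<Rightarrow> 'h \<Rightarrow> real" where
  "family_weight D L c H = (\<Sum>i \<in> {i \<in> D. L i = H}. c i)"

lemma family_weight_nonzero:
  assumes "finite D" "\<And>i. i \<in> D \<Longrightarrow> 0 < c i"
  shows "{H. family_weight D L c H \<noteq> 0} = L ` D"
proof -
  have "family_weight D L c H > 0" if "H \<in> L ` D" for H
    using that assms unfolding family_weight_def by (intro sum_pos) auto
  moreover have "family_weight D L c H = 0" if "H \<notin> L ` D" for H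
    using that unfolding family_weight_def by (intro sum.neutral) auto
  ultimately show ?thesis by force
qed

lemma
  assumes fin: "finite D" and pos: "\<And>i. i \<in> D \<Longrightarrow> 0 < c i"
    and aff: "\<And>i. i \<in> D \<Longrightarrow> affine_hyperplane d (L i)"
    and cov: "\<And>p. p \<in> tri_grid d n \<Longrightarrow> 1 \<le> (\<Sum>i \<in> {i \<in> D. p \<in> L i}. c i)"
  shows frac_cover_family_weight: "frac_cover d n (family_weight D L c)"
    and total_weight_family_weight: "total_weight (family_weight D L c) = (\<Sum>i\<in>D. c i)"
proof -
  have nz: "{H. family_weight D L c H \<noteq> 0} = L ` D"
    using fin pos by (rule family_weight_nonzero)
  have regroup: "(\<Sum>H \<in> L ` E. family_weight D L c H) = (\<Sum>i\<in>E. c i)"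
    if "E \<subseteq> D" "\<And>i. i \<in> D \<Longrightarrow> L i \<in> L ` E \<Longrightarrow> i \<in> E" for E
  proof -
    have "(\<Sum>H \<in> L ` E. family_weight D L c H) = (\<Sum>H \<in> L ` E. \<Sum>i \<in> {i \<in> E. L i = H}. c i)"
      unfolding family_weight_def using that by (intro sum.cong refl) blast
    also have "\<dots> = (\<Sum>i\<in>E. c i)"
      using that fin finite_subset by (intro sum.image_gen[symmetric]) blast
    finally show ?thesis .
  qed
  show "total_weight (family_weight D L c) = (\<Sum>i\<in>D. c i)"
    unfolding total_weight_def nz by (rule regroup) auto
  show "frac_cover d n (family_weight D L c)"
    unfolding frac_cover_def nz
  proof (intro conjI allI impI ballI)
    show "finite (L ` D)" using fin by simp
  next
    fix H assume "family_weight D L c H \<noteq> 0"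
    then have "H \<in> L ` D" using nz by blast
    then show "affine_hyperplane d H" using aff by blast
  next
    fix H show "0 \<le> family_weight D L c H"
      unfolding family_weight_def using pos by (intro sum_nonneg) (simp add: less_imp_le)
  next
    fix p assume "p \<in> tri_grid d n"
    have "{H. family_weight D L c H \<noteq> 0 \<and> p \<in> H} = L ` {i \<in> D. p \<in> L i}"
      using nz by auto
    then show "1 \<le> (\<Sum>H \<in> {H. family_weight D L c H \<noteq> 0 \<and> p \<in> H}. family_weight D L c H)"
      using cov[OF \<open>p \<in> tri_grid d n\<close>] regroup[of "{i \<in> D. p \<in> L i}"] by force
  qed
qed

lemma f_star_eqI:
  assumes "frac_cover d n w" "total_weight w = t"
    and "\<And>w. frac_cover d n w \<Longrightarrow> t \<le> total_weight w"
  shows "f_star n d = t"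
  unfolding f_star_def using assms by (intro cInf_eq_minimum) auto

lemma sum_atMost_descending: "(\<Sum>i\<le>m. real (m + 1) - real i) = real (m + 1) * real (m + 2) / 2"
proof -
  have "2 * (\<Sum>i\<le>m. real i) = real m * (real m + 1)"
    using double_gauss_sum[of m] by (simp add: atLeast0AtMost)
  then show ?thesis by (simp add: sum_subtractf field_simps)
qed

fun cover_line :: "nat \<Rightarrow> nat \<times> nat \<Rightarrow> (nat \<Rightarrow> real) set" where
  "cover_line j (k, i) =
     (if k = 0 then line2 1 0 (real i) else if k = 1 then line2 0 1 (real i)
      else line2 1 1 (real (3 * j) - real i))"

definition cover_weight :: "nat \<Rightarrow> nat \<Rightarrow> real" where
  "cover_weight j i = (real (2 * j + 1) - real i) / real (3 * (j + 1))"

lemma cover_weight_le: "cover_weight j t \<le> (if t \<le> 2 * j then cover_weight j t else 0)"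
  by (simp add: cover_weight_def divide_nonpos_nonneg)

lemma sum_cover_weight: "3 * (\<Sum>i\<le>2 * j. cover_weight j i) = real (2 * j + 1)"
  using sum_atMost_descending[of "2 * j"]
  by (simp add: cover_weight_def flip: sum_divide_distrib) (simp add: field_simps)

lemma grid_point_in_cover_line:
  assumes "x + y \<le> 3 * j"
  shows "grid_point (x, y) \<in> cover_line j (k, i) \<longleftrightarrow>
    (if k = 0 then x = i else if k = 1 then y = i else 3 * j - (x + y) = i)"
  using assms by auto

lemma cover_lines_cover_point:
  assumes "x + y \<le> 3 * j"
  shows "1 \<le> (\<Sum>d \<in> {d \<in> {..<3} \<times> {..2 * j}. grid_point (x, y) \<in> cover_line j d}. cover_weight j (snd d))"
proof -
  let ?z = "3 * j - (x + y)"
  have "1 = cover_weight j x + cover_weight j y + cover_weight j ?z"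
  proof -
    have "real ?z = 3 * real j - real x - real y"
      using assms by (simp add: of_nat_diff)
    then show ?thesis by (simp add: cover_weight_def divide_simps)
  qed
  also have "\<dots> \<le> (if x \<le> 2 * j then cover_weight j x else 0) + (if y \<le> 2 * j then cover_weight j y else 0)
      + (if ?z \<le> 2 * j then cover_weight j ?z else 0)"
    by (intro add_mono cover_weight_le)
  also have "\<dots> = (\<Sum>k<3. \<Sum>i\<le>2 * j. if grid_point (x, y) \<in> cover_line j (k, i) then cover_weight j i else 0)"
    unfolding grid_point_in_cover_line[OF assms] by (simp add: numeral_3_eq_3 sum.delta)
  also have "\<dots> = (\<Sum>d \<in> {d \<in> {..<3} \<times> {..2 * j}. grid_point (x, y) \<in> cover_line j d}. cover_weight j (snd d))"
    by (simp add: sum.inter_filter sum.cartesian_product split_def del: cover_line.simps)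
  finally show ?thesis .
qed

lemma ex_frac_cover_tri_grid_2:
  "\<exists>w. frac_cover 2 (3 * j + 1) w \<and> total_weight w = real (2 * j + 1)"
proof -
  let ?D = "{..<3::nat} \<times> {..2 * j}" and ?c = "\<lambda>d. cover_weight j (snd d)"
  have fin: "finite ?D" by simp
  have pos: "0 < ?c d" if "d \<in> ?D" for d
    using that by (auto simp: cover_weight_def)
  have aff: "affine_hyperplane 2 (cover_line j d)" for d
    by (cases d) (simp add: affine_hyperplane_line2)
  have cov: "1 \<le> (\<Sum>d \<in> {d \<in> ?D. p \<in> cover_line j d}. ?c d)" if "p \<in> tri_grid 2 (3 * j + 1)" for p
    using that cover_lines_cover_point by (auto simp: tri_grid_2_eq)
  have "(\<Sum>d\<in>?D. ?c d) = 3 * (\<Sum>i\<le>2 * j. cover_weight j i)"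
    by (simp add: sum.cartesian_product' numeral_3_eq_3)
  then show ?thesis
    using frac_cover_family_weight[OF fin pos aff cov] total_weight_family_weight[OF fin pos aff cov]
    by (auto simp: sum_cover_weight)
qed

lemma card_le_if_separated:
  fixes g :: "'a \<Rightarrow> nat"
  assumes "\<And>s. s \<in> B \<Longrightarrow> g s \<le> 2 * m"
    and "\<And>s t. s \<in> B \<Longrightarrow> t \<in> B \<Longrightarrow> s \<noteq> t \<Longrightarrow> g s + 2 \<le> g t \<or> g t + 2 \<le> g s"
  shows "card B \<le> m + 1"
proof -
  have "inj_on (\<lambda>s. g s div 2) B"
  proof (rule inj_onI, rule ccontr)
    fix s t assume "s \<in> B" "t \<in> B" "g s div 2 = g t div 2" "s \<noteq> t"
    then have "g s + 2 \<le> g t \<or> g t + 2 \<le> g s" using assms(2) by blast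
    moreover have "2 * (g s div 2) \<le> g s" "g s < 2 * (g s div 2) + 2"
      "2 * (g t div 2) \<le> g t" "g t < 2 * (g t div 2) + 2" by auto
    ultimately show False using \<open>g s div 2 = g t div 2\<close> by linarith
  qed
  moreover have "(\<lambda>s. g s div 2) ` B \<subseteq> {..m}"
  proof (rule image_subsetI)
    fix s assume "s \<in> B"
    then have "g s div 2 \<le> 2 * m div 2" using assms(1) div_le_mono by blast
    then show "g s div 2 \<in> {..m}" by simp
  qed
  ultimately have "card B \<le> card {..m}"
    by (intro card_inj_on_le) auto
  then show ?thesis by simp
qed

lemma separated_of_steep_line:
  fixes a0 a1 :: real and u v :: int
  assumes "a0 * u + a1 * v = 0" "a0 \<noteq> 0" "\<bar>a0\<bar> < \<bar>a1\<bar>" "u \<noteq> 0 \<or> v \<noteq> 0"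
  shows "2 \<le> \<bar>u\<bar>"
proof -
  have "v \<noteq> 0" using assms by auto
  have "a1 * v = - (a0 * u)"
    using assms(1) by linarith
  then have "\<bar>a1 * v\<bar> = \<bar>a0 * u\<bar>"
    by simp
  then have "\<bar>a1\<bar> * \<bar>v\<bar> = \<bar>a0\<bar> * \<bar>u\<bar>"
    by (simp only: abs_mult)
  moreover have "\<bar>a0\<bar> * \<bar>v\<bar> < \<bar>a1\<bar> * \<bar>v\<bar>"
    using assms(3) \<open>v \<noteq> 0\<close> by simp
  ultimately have "\<bar>a0\<bar> * \<bar>of_int v\<bar> < \<bar>a0\<bar> * \<bar>of_int u\<bar>"
    by simp
  then have "\<bar>v\<bar> < \<bar>u\<bar>"
    by (metis abs_ge_zero mult_less_cancel_left of_int_abs of_int_less_iff)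
  with \<open>v \<noteq> 0\<close> show ?thesis by linarith
qed

lemma card_line_inter_le:
  fixes S :: "(nat \<times> nat) set" and a0 a1 b :: real
  assumes fin: "finite S"
    and bounds: "\<And>s. s \<in> S \<Longrightarrow> fst s \<le> 2 * m \<and> snd s \<le> 2 * m \<and> m \<le> fst s + snd s \<and> fst s + snd s \<le> 3 * m"
    and fibre_fst: "\<And>c. card {s \<in> S. fst s = c} \<le> m + 1"
    and fibre_snd: "\<And>c. card {s \<in> S. snd s = c} \<le> m + 1"
    and fibre_sum: "\<And>c. card {s \<in> S. fst s + snd s = c} \<le> m + 1"
    and nontrivial: "a0 \<noteq> 0 \<or> a1 \<noteq> 0"
  shows "card {s \<in> S. a0 * real (fst s) + a1 * real (snd s) = b} \<le> m + 1"
proof -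
  let ?B = "{s \<in> S. a0 * real (fst s) + a1 * real (snd s) = b}"
  define u where "u s t = int (fst s) - int (fst t)" for s t :: "nat \<times> nat"
  define v where "v s t = int (snd s) - int (snd t)" for s t :: "nat \<times> nat"
  have diff: "a0 * u s t + a1 * v s t = 0" if "s \<in> ?B" "t \<in> ?B" for s t
    using that unfolding u_def v_def by (simp add: algebra_simps)
  have distinct: "u s t \<noteq> 0 \<or> v s t \<noteq> 0" if "s \<noteq> t" for s t
    using that unfolding u_def v_def by (auto simp: prod_eq_iff)
  have on_fibre: "card ?B \<le> m + 1"
    if "\<And>s t. s \<in> ?B \<Longrightarrow> t \<in> ?B \<Longrightarrow> f s = f t" "\<And>c. card {s \<in> S. f s = c} \<le> m + 1" for f
  proof (cases "?B = {}")
    case False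
    then obtain s0 where "s0 \<in> ?B" by blast
    then have "?B \<subseteq> {s \<in> S. f s = f s0}" using that(1) by blast
    then have "card ?B \<le> card {s \<in> S. f s = f s0}" using fin by (intro card_mono) auto
    with that(2) show ?thesis by (meson order_trans)
  qed (metis card.empty le0)
  consider "a0 = 0" | "a1 = 0" | "a0 = a1" | "a0 = - a1" "a0 \<noteq> 0"
    | "a0 \<noteq> 0" "\<bar>a0\<bar> < \<bar>a1\<bar>" | "a1 \<noteq> 0" "\<bar>a1\<bar> < \<bar>a0\<bar>"
    by linarith
  then show ?thesis
  proof cases
    case 1
    then show ?thesis
      using nontrivial diff by (intro on_fibre[of snd] fibre_snd) (auto simp: v_def)
  next
    case 2
    then show ?thesis
      using nontrivial diff by (intro on_fibre[of fst] fibre_fst) (auto simp: u_def)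
  next
    case 3
    have "fst s + snd s = fst t + snd t" if "s \<in> ?B" "t \<in> ?B" for s t
    proof -
      have "a1 * (u s t + v s t) = 0" using diff[OF that] 3 by (simp add: algebra_simps)
      then show ?thesis using 3 nontrivial unfolding u_def v_def by simp
    qed
    then show ?thesis by (intro on_fibre[of "\<lambda>s. fst s + snd s"] fibre_sum)
  next
    case 4
    show ?thesis
    proof (rule card_le_if_separated[of _ "\<lambda>s. fst s + snd s - m"])
      fix s assume "s \<in> ?B"
      then show "fst s + snd s - m \<le> 2 * m" using bounds by fastforce
    next
      fix s t assume st: "s \<in> ?B" "t \<in> ?B" "s \<noteq> t"
      have "u s t = v s t" using diff[OF st(1,2)] 4 by (simp add: algebra_simps)
      then have "2 \<le> \<bar>u s t + v s t\<bar>" using distinct[OF st(3)] by linarith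
      moreover have "m \<le> fst s + snd s" "m \<le> fst t + snd t" using bounds st by auto
      ultimately show "fst s + snd s - m + 2 \<le> fst t + snd t - m \<or> fst t + snd t - m + 2 \<le> fst s + snd s - m"
        unfolding u_def v_def by linarith
    qed
  next
    case 5
    show ?thesis
    proof (rule card_le_if_separated[of _ fst])
      fix s t assume st: "s \<in> ?B" "t \<in> ?B" "s \<noteq> t"
      have "2 \<le> \<bar>u s t\<bar>" using separated_of_steep_line[OF diff[OF st(1,2)] 5 distinct[OF st(3)]] .
      then show "fst s + 2 \<le> fst t \<or> fst t + 2 \<le> fst s" unfolding u_def by linarith
    qed (use bounds in blast)
  next
    case 6
    show ?thesis
    proof (rule card_le_if_separated[of _ snd])
      fix s t assume st: "s \<in> ?B" "t \<in> ?B" "s \<noteq> t"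
      have "a1 * v s t + a0 * u s t = 0" using diff[OF st(1,2)] by simp
      from separated_of_steep_line[OF this 6] distinct[OF st(3)] have "2 \<le> \<bar>v s t\<bar>" by blast
      then show "snd s + 2 \<le> snd t \<or> snd t + 2 \<le> snd s" unfolding v_def by linarith
    qed (use bounds in blast)
  qed
qed

text \<open>The hexagon x, y, 3j - x - y \<le> 2j without the triangles j \<le> y < j + x (x \<le> j) and
  y < j < x \<le> y + j.\<close>
definition hex_set :: "nat \<Rightarrow> (nat \<times> nat) set" where
  "hex_set j = {(x, y).
     (x \<le> j \<and> j \<le> x + y \<and> y < j) \<or> (x \<le> j \<and> j + x \<le> y \<and> y \<le> 2 * j) \<or>
     (j < x \<and> x \<le> 2 * j \<and> y + j < x) \<or> (j < x \<and> j \<le> y \<and> x + y \<le> 3 * j)}"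

lemma hex_set_bounds:
  "s \<in> hex_set j \<Longrightarrow> fst s \<le> 2 * j \<and> snd s \<le> 2 * j \<and> j \<le> fst s + snd s \<and> fst s + snd s \<le> 3 * j"
  unfolding hex_set_def by auto

lemma finite_hex_set: "finite (hex_set j)"
  by (rule finite_subset[of _ "{..2 * j} \<times> {..2 * j}"]) (auto dest: hex_set_bounds)

lemma hex_set_flip: "(x, y) \<in> hex_set j \<Longrightarrow> (2 * j - y, 2 * j - x) \<in> hex_set j"
  unfolding hex_set_def by auto

lemma hex_set_row:
  assumes "c \<le> 2 * j"
  shows "{y. (c, y) \<in> hex_set j} = (if c \<le> j then {j - c..<j} \<union> {j + c..2 * j} else {..<c - j} \<union> {j..3 * j - c})"
  using assms unfolding hex_set_def by auto

lemma card_hex_set_row: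
  assumes "c \<le> 2 * j"
  shows "card {y. (c, y) \<in> hex_set j} = j + 1"
proof (cases "c \<le> j")
  case True
  then show ?thesis unfolding hex_set_row[OF assms] if_P[OF True] by (subst card_Un_disjoint) auto
next
  case False
  then show ?thesis unfolding hex_set_row[OF assms] if_not_P[OF False] using assms
    by (subst card_Un_disjoint) auto
qed

lemma card_hex_set_fst_fibre: "card {s \<in> hex_set j. fst s = c} = (if c \<le> 2 * j then j + 1 else 0)"
proof -
  have "{s \<in> hex_set j. fst s = c} = Pair c ` {y. (c, y) \<in> hex_set j}" by force
  then have "card {s \<in> hex_set j. fst s = c} = card {y. (c, y) \<in> hex_set j}"
    by (simp add: card_image inj_on_def)
  moreover have "{y. (c, y) \<in> hex_set j} = {}" if "\<not> c \<le> 2 * j"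
    using that hex_set_bounds by fastforce
  ultimately show ?thesis using card_hex_set_row by auto
qed

lemma card_hex_set: "card (hex_set j) = (2 * j + 1) * (j + 1)"
proof -
  have "card (hex_set j) = (\<Sum>s\<in>hex_set j. 1)" by simp
  also have "\<dots> = (\<Sum>c\<le>2 * j. \<Sum>s\<in>{s \<in> hex_set j. fst s = c}. 1)"
    by (rule sum.group[symmetric]) (use finite_hex_set hex_set_bounds in auto)
  finally show ?thesis by (simp add: card_hex_set_fst_fibre)
qed

lemma card_hex_set_snd_fibre: "card {s \<in> hex_set j. snd s = c} \<le> j + 1"
proof -
  let ?flip = "\<lambda>(x, y). (2 * j - y, 2 * j - x)"
  have "inj_on ?flip (hex_set j)"
    by (intro inj_onI) (auto dest!: hex_set_bounds)
  then have "card {s \<in> hex_set j. snd s = c} = card (?flip ` {s \<in> hex_set j. snd s = c})"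
    by (intro card_image[symmetric]) (auto intro: inj_on_subset)
  also have "\<dots> \<le> card {s \<in> hex_set j. fst s = 2 * j - c}"
    using finite_hex_set by (intro card_mono) (auto intro: hex_set_flip)
  also have "\<dots> \<le> j + 1"
    by (simp add: card_hex_set_fst_fibre)
  finally show ?thesis .
qed

lemma card_hex_set_sum_fibre: "card {s \<in> hex_set j. fst s + snd s = c} \<le> j + 1"
proof (cases "j \<le> c \<and> c \<le> 3 * j")
  case True
  define q where "q = (c - j) div 2"
  \<comment> \<open>the x-ranges of the four pieces in the definition of \<^const>\<open>hex_set\<close>\<close>
  let ?A = "{c - j + 1..j}" and ?B = "{c - 2 * j..q}" and ?C = "{q + j + 1..min c (2 * j)}"
    and ?D = "{j + 1..c - j}"
  have "c + j = (c - j) + 2 * j" using True by simp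
  then have half: "(c + j) div 2 = q + j" unfolding q_def by simp
  have "inj_on fst {s \<in> hex_set j. fst s + snd s = c}"
    by (intro inj_onI) (auto simp: prod_eq_iff)
  then have "card {s \<in> hex_set j. fst s + snd s = c} = card (fst ` {s \<in> hex_set j. fst s + snd s = c})"
    by (simp add: card_image)
  also have "\<dots> \<le> card (?A \<union> ?B \<union> ?C \<union> ?D)"
  proof (intro card_mono)
    show "fst ` {s \<in> hex_set j. fst s + snd s = c} \<subseteq> ?A \<union> ?B \<union> ?C \<union> ?D"
    proof
      fix x assume "x \<in> fst ` {s \<in> hex_set j. fst s + snd s = c}"
      then obtain y where "(x, y) \<in> hex_set j" "x + y = c" by force
      then show "x \<in> ?A \<union> ?B \<union> ?C \<union> ?D"
        unfolding hex_set_def q_def half[symmetric] by auto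
    qed
  qed simp
  also have "\<dots> \<le> card ?A + card ?B + card ?C + card ?D"
    by (meson add_le_mono card_Un_le le_refl order_trans)
  also have "\<dots> \<le> j + 1"
  proof -
    have "2 * q \<le> c - j" "c - j \<le> 2 * q + 1" unfolding q_def by auto
    then show ?thesis using True by (auto simp: min_def)
  qed
  finally show ?thesis .
next
  case False
  then have "{s \<in> hex_set j. fst s + snd s = c} = {}" by (auto dest: hex_set_bounds)
  then show ?thesis by (metis card.empty le0)
qed

lemma card_hex_set_fst_fibre_le: "card {s \<in> hex_set j. fst s = c} \<le> j + 1"
  by (simp add: card_hex_set_fst_fibre)

lemma total_weight_tri_grid_2_ge:
  assumes "frac_cover 2 (3 * j + 1) w"
  shows "real (2 * j + 1) \<le> total_weight w"
proof -
  let ?P = "grid_point ` hex_set j"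
  have card_P: "card ?P = (2 * j + 1) * (j + 1)"
    using card_image[OF inj_on_subset[OF inj_grid_point subset_UNIV]] card_hex_set by simp
  have "?P \<subseteq> tri_grid 2 (3 * j + 1)"
  proof -
    have "hex_set j \<subseteq> {s. fst s + snd s < 3 * j + 1}"
      using hex_set_bounds by fastforce
    then show ?thesis unfolding tri_grid_2_eq by (rule image_mono)
  qed
  moreover have "card {p \<in> ?P. p \<in> H} \<le> j + 1" if H: "affine_hyperplane 2 H" for H
  proof -
    obtain a0 a1 b where ab: "a0 \<noteq> 0 \<or> a1 \<noteq> 0" "H = line2 a0 a1 b"
      using H unfolding affine_hyperplane_2_iff by blast
    then have "{p \<in> ?P. p \<in> H} = grid_point ` {s \<in> hex_set j. a0 * real (fst s) + a1 * real (snd s) = b}"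
      by auto
    also have "card \<dots> \<le> card {s \<in> hex_set j. a0 * real (fst s) + a1 * real (snd s) = b}"
      by (rule card_image_le) (simp add: finite_hex_set)
    also have "\<dots> \<le> j + 1"
      by (rule card_line_inter_le[OF finite_hex_set hex_set_bounds card_hex_set_fst_fibre_le
          card_hex_set_snd_fibre card_hex_set_sum_fibre ab(1)])
    finally show ?thesis .
  qed
  ultimately have "real (card ?P) \<le> real (j + 1) * total_weight w"
    using assms finite_hex_set by (intro total_weight_lower_bound) auto
  then have "real (j + 1) * real (2 * j + 1) \<le> real (j + 1) * total_weight w"
    unfolding card_P of_nat_mult by (simp only: mult.commute)
  then show ?thesis by (rule mult_left_le_imp_le) simp
qed

theorem mainTheorem1:
  fixes j :: nat
  shows "f_star (3 * j + 1) 2 = real (2 * j + 1)"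
proof -
  obtain w where "frac_cover 2 (3 * j + 1) w" "total_weight w = real (2 * j + 1)"
    using ex_frac_cover_tri_grid_2 by blast
  then show ?thesis using total_weight_tri_grid_2_ge by (rule f_star_eqI)
qed

end
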